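(* Let $X$ be a real Banach space with a normalized unconditional basis $\mathcal B=(e_n)_{n=1}^\infty$ with biorthogonal functionals $(e_n^* )$ and unconditional constant $M$, and let $\mathcal E=(\varepsilon_n)_{n=1}^\infty$ be a sequence of nonnegative numbers. Let $x_0$ be an extreme point of the brick $K_{\mathcal B,\mathcal E}$. Then $\|x\|\le M\|x_0\|$ for every $x\in K_{\mathcal B,\mathcal E}$. In particular, if $\mathcal B$ is $1$-unconditional then $\|x\|\le\|x_0\|$ for every $x\in K_{\mathcal B,\mathcal E}$.
   Context: The brick is $K_{\mathcal B,\mathcal E}=\{x\in X:\ |e_n^*(x)|\le\varepsilon_n \text{ for all } n\}$. A point $x_0\in A$ is an extreme point of $A$ if for every nonzero $x\in X$ there is $\lambda\in[-1,1]$ with $x_0+\lambda x\notin A$. For an unconditional basis and a sign sequence $\Theta=(\theta_n)$, $\theta_n=\pm1$, let $M_\Theta x=\sum_n\theta_ne_n^*(x)e_n$; the unconditional constant is $\sup_\Theta\|M_\Theta\|$, and the basis is $1$-unconditional if this constant equals $1$. *)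

theory Defs
  imports "HOL-Analysis.Analysis"
begin

definition schauder_basis :: "(nat \<Rightarrow> 'a::banach) \<Rightarrow> bool" where
  "schauder_basis e \<longleftrightarrow>
     (\<forall>x. \<exists>!a::nat \<Rightarrow> real. (\<lambda>N. \<Sum>n<N. a n *\<^sub>R e n) \<longlonglongrightarrow> x)"

definition coeff :: "(nat \<Rightarrow> 'a::banach) \<Rightarrow> nat \<Rightarrow> 'a \<Rightarrow> real" where
  "coeff e n x = (THE a::nat \<Rightarrow> real. (\<lambda>N. \<Sum>k<N. a k *\<^sub>R e k) \<longlonglongrightarrow> x) n"

definition sign_seqs :: "(nat \<Rightarrow> real) set" where
  "sign_seqs = {\<theta>. \<forall>n. \<theta> n = 1 \<or> \<theta> n = -1}"

definition sign_mult :: "(nat \<Rightarrow> 'a::banach) \<Rightarrow> (nat \<Rightarrow> real) \<Rightarrow> 'a \<Rightarrow> 'a" where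
  "sign_mult e \<theta> x = (\<Sum>n. (\<theta> n * coeff e n x) *\<^sub>R e n)"

text \<open>Unconditional basis: a Schauder basis such that for every choice of signs the
  series sum theta_n e_n^*(x) e_n converges for every x, the resulting operators M_Theta
  are bounded, and the unconditional constant sup_Theta ||M_Theta|| is finite
  (boundedness/finiteness is automatic in a Banach space, by uniform boundedness).\<close>
definition unconditional_basis :: "(nat \<Rightarrow> 'a::banach) \<Rightarrow> bool" where
  "unconditional_basis e \<longleftrightarrow> schauder_basis e \<and>
     (\<forall>\<theta>\<in>sign_seqs. \<forall>x. summable (\<lambda>n. (\<theta> n * coeff e n x) *\<^sub>R e n)) \<and>
     (\<forall>\<theta>\<in>sign_seqs. bounded_linear (sign_mult e \<theta>)) \<and>
     bdd_above ((\<lambda>\<theta>. onorm (sign_mult e \<theta>)) ` sign_seqs)"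

definition unconditional_constant :: "(nat \<Rightarrow> 'a::banach) \<Rightarrow> real" where
  "unconditional_constant e = (SUP \<theta>\<in>sign_seqs. onorm (sign_mult e \<theta>))"

definition brick :: "(nat \<Rightarrow> 'a::banach) \<Rightarrow> (nat \<Rightarrow> real) \<Rightarrow> 'a set" where
  "brick e \<epsilon> = {x. \<forall>n. \<bar>coeff e n x\<bar> \<le> \<epsilon> n}"

definition extreme_pt :: "'a::real_vector \<Rightarrow> 'a set \<Rightarrow> bool" where
  "extreme_pt x0 A \<longleftrightarrow> x0 \<in> A \<and>
     (\<forall>x. x \<noteq> 0 \<longrightarrow> (\<exists>t\<in>{-1..1::real}. x0 + t *\<^sub>R x \<notin> A))"

end

theory Submission
  imports Defs
begin

text \<open>An extreme point x0 of the brick has |e_n^*(x0)| = \<epsilon>_n for every n: otherwise x0 could be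
  moved a little in the direction e_n in both senses without leaving the brick. Hence every x
  in the brick is coordinatewise dominated by x0, and a change of signs together with
  convexity of the norm gives ||x|| \<le> M ||x0||, first for partial sums and then in the limit.\<close>

lemma coeff_sums_tendsto:
  assumes "schauder_basis e"
  shows "(\<lambda>N. \<Sum>k<N. coeff e k x *\<^sub>R e k) \<longlonglongrightarrow> x"
proof -
  have "\<exists>!a::nat \<Rightarrow> real. (\<lambda>N. \<Sum>n<N. a n *\<^sub>R e n) \<longlonglongrightarrow> x"
    using assms unfolding schauder_basis_def by blast
  from theI'[OF this] show ?thesis unfolding coeff_def by simp
qed

lemma coeff_eqI:
  assumes "schauder_basis e" and "(\<lambda>N. \<Sum>k<N. a k *\<^sub>R e k) \<longlonglongrightarrow> x"
  shows "coeff e n x = a n"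
proof -
  have "\<exists>!a::nat \<Rightarrow> real. (\<lambda>N. \<Sum>n<N. a n *\<^sub>R e n) \<longlonglongrightarrow> x"
    using assms(1) unfolding schauder_basis_def by blast
  then have "(THE a. (\<lambda>N. \<Sum>k<N. a k *\<^sub>R e k) \<longlonglongrightarrow> x) = a"
    by (rule the1_equality) (rule assms(2))
  then show ?thesis unfolding coeff_def by simp
qed

lemma coeff_add_scaleR:
  assumes "schauder_basis e"
  shows "coeff e n (x + t *\<^sub>R y) = coeff e n x + t * coeff e n y"
proof (rule coeff_eqI[OF assms])
  have "(\<lambda>N. (\<Sum>k<N. coeff e k x *\<^sub>R e k) + t *\<^sub>R (\<Sum>k<N. coeff e k y *\<^sub>R e k))
      \<longlonglongrightarrow> x + t *\<^sub>R y"
    by (intro tendsto_intros coeff_sums_tendsto assms)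
  then show "(\<lambda>N. \<Sum>k<N. (coeff e k x + t * coeff e k y) *\<^sub>R e k) \<longlonglongrightarrow> x + t *\<^sub>R y"
    by (simp add: scaleR_sum_right sum.distrib scaleR_add_left)
qed

lemma coeff_sum:
  assumes "schauder_basis e"
  shows "coeff e k (\<Sum>n<N. c n *\<^sub>R e n) = (if k < N then c k else 0)"
proof (rule coeff_eqI[OF assms], rule tendsto_eventually, rule eventually_sequentiallyI)
  fix M assume "N \<le> M"
  then have "(\<Sum>k<M. (if k < N then c k else 0) *\<^sub>R e k)
      = (\<Sum>k<N. (if k < N then c k else 0) *\<^sub>R e k)"
    by (intro sum.mono_neutral_right) auto
  then show "(\<Sum>k<M. (if k < N then c k else 0) *\<^sub>R e k) = (\<Sum>n<N. c n *\<^sub>R e n)"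
    by simp
qed

lemma coeff_basis:
  assumes "schauder_basis e"
  shows "coeff e k (e m) = (if k = m then 1 else 0)"
proof -
  have "(\<Sum>n<Suc m. (if n = m then 1 else 0) *\<^sub>R e n) = e m"
    by (simp add: if_distrib cong: if_cong)
  with coeff_sum[OF assms, where k=k and N="Suc m" and c="\<lambda>n. if n = m then 1 else 0"] show ?thesis
    by auto
qed

lemma coeff_add_scaleR_basis:
  assumes "schauder_basis e"
  shows "coeff e k (x + t *\<^sub>R e n) = (if k = n then coeff e k x + t else coeff e k x)"
  by (simp add: coeff_add_scaleR[OF assms] coeff_basis[OF assms])

lemma schauder_basis_nonzero:
  assumes "schauder_basis e"
  shows "e n \<noteq> 0"
proof
  assume "e n = 0"
  then have "coeff e n (e n) = coeff e n (0 + 0 *\<^sub>R e n)" by simp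
  then show False
    using coeff_sum[OF assms, where k=n and N=0]
    by (simp add: coeff_add_scaleR[OF assms] coeff_basis[OF assms])
qed

lemma extreme_pt_brick_coeff:
  assumes "schauder_basis e" and "extreme_pt x0 (brick e \<epsilon>)"
  shows "\<bar>coeff e n x0\<bar> = \<epsilon> n"
proof (rule ccontr)
  have x0: "\<bar>coeff e k x0\<bar> \<le> \<epsilon> k" for k
    using assms(2) unfolding extreme_pt_def brick_def by blast
  define d where "d = \<epsilon> n - \<bar>coeff e n x0\<bar>"
  assume "\<bar>coeff e n x0\<bar> \<noteq> \<epsilon> n"
  with x0 have d: "0 < d"
    by (simp add: d_def order.strict_iff_order)
  then have "d *\<^sub>R e n \<noteq> 0"
    using schauder_basis_nonzero[OF assms(1)] by simp
  then obtain t where t: "\<bar>t\<bar> \<le> 1" and "x0 + t *\<^sub>R (d *\<^sub>R e n) \<notin> brick e \<epsilon>"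
    using assms(2) unfolding extreme_pt_def by (metis atLeastAtMost_iff abs_le_iff minus_le_iff)
  then obtain k where k: "\<epsilon> k < \<bar>coeff e k (x0 + (t * d) *\<^sub>R e n)\<bar>"
    unfolding brick_def by (auto simp: not_le)
  have "\<bar>t * d\<bar> \<le> d"
    using t d by (simp add: d_def abs_mult mult_left_le_one_le)
  then show False
    using k x0[of k] by (auto simp: coeff_add_scaleR_basis[OF assms(1)] d_def split: if_splits)
qed

text \<open>The norm is convex, so on the cube [-1,1]^S it is maximal at a vertex. The offset w
  makes the induction over S go through.\<close>
lemma norm_sum_scaleR_le_sign_choices:
  fixes v :: "nat \<Rightarrow> 'a::real_normed_vector"
  assumes "finite S" and "\<forall>n\<in>S. \<bar>l n\<bar> \<le> 1"
    and "\<forall>\<theta>\<in>sign_seqs. norm (w + (\<Sum>n\<in>S. \<theta> n *\<^sub>R v n)) \<le> B"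
  shows "norm (w + (\<Sum>n\<in>S. l n *\<^sub>R v n)) \<le> B"
  using assms
proof (induction S arbitrary: w rule: finite_induct)
  case empty
  have "(\<lambda>n. 1) \<in> sign_seqs" by (simp add: sign_seqs_def)
  then show ?case using empty by force
next
  case (insert a S)
  let ?R = "\<Sum>n\<in>S. l n *\<^sub>R v n"
  have vertex: "norm ((w + s *\<^sub>R v a) + ?R) \<le> B" if s: "s = 1 \<or> s = -1" for s
  proof (rule insert.IH)
    show "\<forall>n\<in>S. \<bar>l n\<bar> \<le> 1" using insert.prems by auto
    show "\<forall>\<theta>\<in>sign_seqs. norm (w + s *\<^sub>R v a + (\<Sum>n\<in>S. \<theta> n *\<^sub>R v n)) \<le> B"
    proof
      fix \<theta> assume "\<theta> \<in> sign_seqs"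
      with s have "\<theta>(a := s) \<in> sign_seqs" by (auto simp: sign_seqs_def)
      with insert.prems have "norm (w + (\<Sum>n\<in>insert a S. (\<theta>(a := s)) n *\<^sub>R v n)) \<le> B"
        by blast
      moreover have "(\<Sum>n\<in>S. (\<theta>(a := s)) n *\<^sub>R v n) = (\<Sum>n\<in>S. \<theta> n *\<^sub>R v n)"
        using insert.hyps by (intro sum.cong) auto
      ultimately show "norm (w + s *\<^sub>R v a + (\<Sum>n\<in>S. \<theta> n *\<^sub>R v n)) \<le> B"
        using insert.hyps by (simp add: add.assoc)
    qed
  qed
  define p where "p = (1 + l a) / 2"
  have p: "0 \<le> p" "p \<le> 1" using insert.prems unfolding p_def by auto
  have "w + (\<Sum>n\<in>insert a S. l n *\<^sub>R v n) = (w + ?R) + l a *\<^sub>R v a"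
    using insert.hyps by (simp add: algebra_simps)
  also have "\<dots> = p *\<^sub>R ((w + v a) + ?R) + (1 - p) *\<^sub>R ((w + (-1) *\<^sub>R v a) + ?R)"
    unfolding p_def by (simp add: algebra_simps flip: scaleR_add_left) (simp add: scaleR_add_left)
  also have "norm \<dots> \<le> p * norm ((w + v a) + ?R) + (1 - p) * norm ((w + (-1) *\<^sub>R v a) + ?R)"
    using p by (intro order_trans[OF norm_triangle_ineq]) simp
  also have "\<dots> \<le> p * B + (1 - p) * B"
    using p vertex[of 1] vertex[of "-1"] by (intro add_mono mult_left_mono) simp_all
  finally show ?case by (simp add: algebra_simps)
qed

lemma unconditional_basis_imp_schauder_basis:
  "unconditional_basis e \<Longrightarrow> schauder_basis e"
  unfolding unconditional_basis_def by blast

lemma norm_sign_mult_le: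
  assumes "unconditional_basis e" and "\<theta> \<in> sign_seqs"
  shows "norm (sign_mult e \<theta> x) \<le> unconditional_constant e * norm x"
proof -
  have "bounded_linear (sign_mult e \<theta>)"
    and "bdd_above ((\<lambda>\<theta>. onorm (sign_mult e \<theta>)) ` sign_seqs)"
    using assms unfolding unconditional_basis_def by auto
  then have "norm (sign_mult e \<theta> x) \<le> onorm (sign_mult e \<theta>) * norm x"
    and "onorm (sign_mult e \<theta>) \<le> unconditional_constant e"
    using assms(2) unfolding unconditional_constant_def by (auto intro: onorm cSUP_upper)
  then show ?thesis by (meson mult_right_mono norm_ge_zero order_trans)
qed

lemma sign_mult_sum:
  assumes "schauder_basis e"
  shows "sign_mult e \<theta> (\<Sum>n<N. c n *\<^sub>R e n) = (\<Sum>n<N. \<theta> n *\<^sub>R (c n *\<^sub>R e n))"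
proof -
  have "sign_mult e \<theta> (\<Sum>n<N. c n *\<^sub>R e n)
      = (\<Sum>n<N. (\<theta> n * coeff e n (\<Sum>n<N. c n *\<^sub>R e n)) *\<^sub>R e n)"
    unfolding sign_mult_def by (rule suminf_finite) (auto simp: coeff_sum[OF assms])
  then show ?thesis by (simp add: coeff_sum[OF assms])
qed

lemma norm_sum_le_unconditional_constant:
  assumes "unconditional_basis e" and "\<forall>n. \<bar>a n\<bar> \<le> \<bar>c n\<bar>"
  shows "norm (\<Sum>n<N. a n *\<^sub>R e n) \<le> unconditional_constant e * norm (\<Sum>n<N. c n *\<^sub>R e n)"
proof -
  have sb: "schauder_basis e" using assms(1) by (rule unconditional_basis_imp_schauder_basis)
  define l where "l n = (if c n = 0 then 0 else a n / c n)" for n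
  have l: "l n * c n = a n" "\<bar>l n\<bar> \<le> 1" for n
    using assms(2)[rule_format, of n] unfolding l_def by (auto simp: abs_divide divide_le_eq_1)
  have signs: "\<forall>\<theta>\<in>sign_seqs. norm (0 + (\<Sum>n\<in>{..<N}. \<theta> n *\<^sub>R (c n *\<^sub>R e n)))
      \<le> unconditional_constant e * norm (\<Sum>n<N. c n *\<^sub>R e n)"
  proof
    fix \<theta> assume "\<theta> \<in> sign_seqs"
    from norm_sign_mult_le[OF assms(1) this, of "\<Sum>n<N. c n *\<^sub>R e n"]
    show "norm (0 + (\<Sum>n\<in>{..<N}. \<theta> n *\<^sub>R (c n *\<^sub>R e n)))
      \<le> unconditional_constant e * norm (\<Sum>n<N. c n *\<^sub>R e n)"
      by (simp only: sign_mult_sum[OF sb] add_0_left)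
  qed
  have "norm (0 + (\<Sum>n\<in>{..<N}. l n *\<^sub>R (c n *\<^sub>R e n)))
      \<le> unconditional_constant e * norm (\<Sum>n<N. c n *\<^sub>R e n)"
    by (rule norm_sum_scaleR_le_sign_choices[OF finite_lessThan _ signs]) (use l(2) in blast)
  moreover have "(\<Sum>n\<in>{..<N}. l n *\<^sub>R (c n *\<^sub>R e n)) = (\<Sum>n<N. a n *\<^sub>R e n)"
    by (intro sum.cong) (simp_all add: l(1))
  ultimately show ?thesis by simp
qed

lemma norm_le_unconditional_constant:
  assumes "unconditional_basis e" and "\<forall>n. \<bar>coeff e n x\<bar> \<le> \<bar>coeff e n y\<bar>"
  shows "norm x \<le> unconditional_constant e * norm y"
proof -
  have sb: "schauder_basis e" using assms(1) by (rule unconditional_basis_imp_schauder_basis)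
  have "(\<lambda>N. norm (\<Sum>n<N. coeff e n x *\<^sub>R e n)) \<longlonglongrightarrow> norm x"
    by (intro tendsto_norm coeff_sums_tendsto sb)
  moreover have "(\<lambda>N. unconditional_constant e * norm (\<Sum>n<N. coeff e n y *\<^sub>R e n))
      \<longlonglongrightarrow> unconditional_constant e * norm y"
    by (intro tendsto_mult_left tendsto_norm coeff_sums_tendsto sb)
  moreover have "\<exists>N0. \<forall>N\<ge>N0. norm (\<Sum>n<N. coeff e n x *\<^sub>R e n)
      \<le> unconditional_constant e * norm (\<Sum>n<N. coeff e n y *\<^sub>R e n)"
    using norm_sum_le_unconditional_constant[OF assms] by simp
  ultimately show ?thesis by (rule LIMSEQ_le)
qed

theorem proposition2p8:
  fixes e :: "nat \<Rightarrow> 'a::banach" and \<epsilon> :: "nat \<Rightarrow> real" and x0 :: 'a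
  assumes "unconditional_basis e"
    and "\<forall>n. norm (e n) = 1"
    and "\<forall>n. \<epsilon> n \<ge> 0"
    and "extreme_pt x0 (brick e \<epsilon>)"
  shows "(\<forall>x\<in>brick e \<epsilon>. norm x \<le> unconditional_constant e * norm x0) \<and>
         (unconditional_constant e = 1 \<longrightarrow> (\<forall>x\<in>brick e \<epsilon>. norm x \<le> norm x0))"
proof -
  have "schauder_basis e" using assms(1) by (rule unconditional_basis_imp_schauder_basis)
  then have "\<forall>n. \<bar>coeff e n x\<bar> \<le> \<bar>coeff e n x0\<bar>" if "x \<in> brick e \<epsilon>" for x
    using that extreme_pt_brick_coeff[OF _ assms(4)] unfolding brick_def by simp
  then have bound: "\<forall>x\<in>brick e \<epsilon>. norm x \<le> unconditional_constant e * norm x0"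
    using norm_le_unconditional_constant[OF assms(1)] by blast
  moreover have "\<forall>x\<in>brick e \<epsilon>. norm x \<le> norm x0" if "unconditional_constant e = 1"
    using bound by (simp add: that)
  ultimately show ?thesis by blast
qed

end
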